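(* Let $H$ be a Hilbert space and, for $i=1,2$, let $(K_i,[\cdot,\cdot]_i)$ be Pontryagin spaces, $A_i$ self-adjoint linear relations in $K_i$, $z_0\in\rho(A_1)\cap\rho(A_2)\cap\mathbb{C}^+$, $\Gamma_i:H\to K_i$ bounded, and $$Q_i(z)=Q_i(z_0)^*+(z-\bar z_0)\Gamma_i^+\big(I_i+(z-z_0)(A_i-z)^{-1}\big)\Gamma_i .$$ Let $\tilde K=K_1[+]K_2$ (orthogonal direct sum), let $A=A_1\oplus A_2=\{\{k_1[+]k_2,h_1[+]h_2\}:\{k_i,h_i\}\in A_i\}$, and let $\Gamma:H\to\tilde K$, $\Gamma h=\Gamma_1h[+]\Gamma_2h$, so that $\Gamma^+(k_1[+]k_2)=\Gamma_1^+k_1+\Gamma_2^+k_2$. Then $Q:=Q_1+Q_2$ satisfies $$Q(z)=Q_1(z_0)^*+Q_2(z_0)^*+(z-\bar z_0)\Gamma^+\big(I+(z-z_0)(A-z)^{-1}\big)\Gamma. \tag{14}$$ (i) If $\Gamma^+:\tilde K\to H$ is injective, then the representation (14) is minimal, i.e. $\tilde K=\overline{\operatorname{span}}\{(I+(z-z_0)(A-z)^{-1})\Gamma h: z\in\rho(A),h\in H\}$. (ii) Suppose instead that $A_i$ are bounded self-adjoint operators in $K_i$, $\Gamma_{0i}:H\to K_i$ are bounded, $Q_i(z)=\Gamma_{0i}^+(A_i-z)^{-1}\Gamma_{0i}$, and with $\Gamma_0h:=\Gamma_{01}h[+]\Gamma_{02}h$ and $A=A_1\oplus A_2$ the representation $Q(z):=Q_1(z)+Q_2(z)=\Gamma_0^+(A-z)^{-1}\Gamma_0$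 is minimal, i.e. $K_1[+]K_2=\overline{\operatorname{span}}\{(A-z)^{-1}\Gamma_0h:z\in\rho(A),h\in H\}$. If at least one of $\Gamma_{01},\Gamma_{02}$ is injective, then: whenever $f\in H$ satisfies $(f,Q(z)h)=0$ for all $z\in\rho(A)$ and all $h\in H$, it follows that $f=0$.
   Context: $H$ is a Hilbert space with inner product $(\cdot,\cdot)$. A Pontryagin space is a Krein space whose indefinite inner product $[\cdot,\cdot]$ has finitely many negative squares. For a bounded operator $\Gamma:H\to K$ into a Pontryagin space, $\Gamma^+:K\to H$ is defined by $(h,\Gamma^+k)=[\Gamma h,k]$. $K_1[+]K_2$ denotes the orthogonal direct sum with inner product $[k_1+k_2,k_1'+k_2']=[k_1,k_1']_1+[k_2,k_2']_2$. *)

theory Defs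
  imports "HOL-Analysis.Analysis"
begin

(* Complex vector space structure on a (real) normed space 'a, given by an explicit
   complex scalar multiplication sm, compatible with the real scaling and the norm. *)
definition cnvs :: "(complex \<Rightarrow> 'a::real_normed_vector \<Rightarrow> 'a) \<Rightarrow> bool" where
  "cnvs sm \<longleftrightarrow> Vector_Spaces.vector_space sm
     \<and> (\<forall>r x. sm (complex_of_real r) x = r *\<^sub>R x)
     \<and> (\<forall>c x. norm (sm c x) = cmod c * norm x)"

definition sesq :: "(complex \<Rightarrow> 'a::plus \<Rightarrow> 'a) \<Rightarrow> ('a \<Rightarrow> 'a \<Rightarrow> complex) \<Rightarrow> bool" where
  "sesq sm F \<longleftrightarrow> (\<forall>x y z. F (x + y) z = F x z + F y z)
     \<and> (\<forall>c x y. F (sm c x) y = c * F x y)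
     \<and> (\<forall>x y. F y x = cnj (F x y))"

definition chilbert :: "(complex \<Rightarrow> 'h::banach \<Rightarrow> 'h) \<Rightarrow> ('h \<Rightarrow> 'h \<Rightarrow> complex) \<Rightarrow> bool" where
  "chilbert sm ip \<longleftrightarrow> cnvs sm \<and> sesq sm ip \<and> (\<forall>x. ip x x = complex_of_real ((norm x)\<^sup>2))"

(* Pontryagin space: Krein space (with fundamental symmetry J, whose J-inner product
   [x, J y] gives the Hilbert norm of 'k) such that the negative part {x. J x = -x}
   is finite-dimensional, i.e. B has finitely many negative squares. *)
definition pontryagin :: "(complex \<Rightarrow> 'k::banach \<Rightarrow> 'k) \<Rightarrow> ('k \<Rightarrow> 'k \<Rightarrow> complex) \<Rightarrow> bool" where
  "pontryagin sm B \<longleftrightarrow> cnvs sm \<and> sesq sm B \<and>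
     (\<exists>J. Vector_Spaces.linear sm sm J \<and> (\<forall>x. J (J x) = x)
        \<and> (\<forall>x y. B (J x) y = B x (J y))
        \<and> (\<forall>x. B x (J x) = complex_of_real ((norm x)\<^sup>2))
        \<and> (\<exists>S. finite S \<and> {x. J x = - x} \<subseteq> module.span sm S))"

definition cbounded :: "(complex \<Rightarrow> 'a::real_normed_vector \<Rightarrow> 'a) \<Rightarrow> (complex \<Rightarrow> 'b::real_normed_vector \<Rightarrow> 'b)
     \<Rightarrow> ('a \<Rightarrow> 'b) \<Rightarrow> bool" where
  "cbounded s1 s2 T \<longleftrightarrow> Vector_Spaces.linear s1 s2 T \<and> (\<exists>C. \<forall>x. norm (T x) \<le> C * norm x)"

definition has_kadj :: "('h \<Rightarrow> 'h \<Rightarrow> complex) \<Rightarrow> ('k \<Rightarrow> 'k \<Rightarrow> complex) \<Rightarrow> ('h \<Rightarrow> 'k) \<Rightarrow> bool" where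
  "has_kadj ip B G \<longleftrightarrow> (\<exists>G'. \<forall>h k. ip h (G' k) = B (G h) k)"

definition kadj :: "('h \<Rightarrow> 'h \<Rightarrow> complex) \<Rightarrow> ('k \<Rightarrow> 'k \<Rightarrow> complex) \<Rightarrow> ('h \<Rightarrow> 'k) \<Rightarrow> ('k \<Rightarrow> 'h)" where
  "kadj ip B G = (THE G'. \<forall>h k. ip h (G' k) = B (G h) k)"

definition prod_sm :: "(complex \<Rightarrow> 'a \<Rightarrow> 'a) \<Rightarrow> (complex \<Rightarrow> 'b \<Rightarrow> 'b) \<Rightarrow> complex \<Rightarrow> 'a \<times> 'b \<Rightarrow> 'a \<times> 'b" where
  "prod_sm s1 s2 c p = (s1 c (fst p), s2 c (snd p))"

definition lin_rel :: "(complex \<Rightarrow> 'k::ab_group_add \<Rightarrow> 'k) \<Rightarrow> ('k \<times> 'k) set \<Rightarrow> bool" where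
  "lin_rel sm A \<longleftrightarrow> module.subspace (prod_sm sm sm) A"

definition rel_adj :: "('k \<Rightarrow> 'k \<Rightarrow> complex) \<Rightarrow> ('k \<times> 'k) set \<Rightarrow> ('k \<times> 'k) set" where
  "rel_adj B A = {(k, h). \<forall>(f, g) \<in> A. B g k = B f h}"

definition selfadj_rel :: "(complex \<Rightarrow> 'k::ab_group_add \<Rightarrow> 'k) \<Rightarrow> ('k \<Rightarrow> 'k \<Rightarrow> complex) \<Rightarrow> ('k \<times> 'k) set \<Rightarrow> bool" where
  "selfadj_rel sm B A \<longleftrightarrow> lin_rel sm A \<and> rel_adj B A = A"

(* (A - z)^{-1} = {{g - z f, f}. {f,g} in A}, evaluated at k *)
definition resolv :: "(complex \<Rightarrow> 'k::plus \<Rightarrow> 'k) \<Rightarrow> ('k \<times> 'k) set \<Rightarrow> complex \<Rightarrow> 'k \<Rightarrow> 'k" where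
  "resolv sm A z k = (THE f. (f, k + sm z f) \<in> A)"

(* resolvent set: (A - z)^{-1} is an everywhere defined bounded operator *)
definition rset :: "(complex \<Rightarrow> 'k::real_normed_vector \<Rightarrow> 'k) \<Rightarrow> ('k \<times> 'k) set \<Rightarrow> complex set" where
  "rset sm A = {z. (\<forall>k. \<exists>!f. (f, k + sm z f) \<in> A) \<and> cbounded sm sm (resolv sm A z)}"

definition gr :: "('k \<Rightarrow> 'k) \<Rightarrow> ('k \<times> 'k) set" where
  "gr T = {(x, T x) | x. True}"

definition psum :: "('a \<Rightarrow> 'a \<Rightarrow> complex) \<Rightarrow> ('b \<Rightarrow> 'b \<Rightarrow> complex) \<Rightarrow> 'a \<times> 'b \<Rightarrow> 'a \<times> 'b \<Rightarrow> complex" where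
  "psum B1 B2 p q = B1 (fst p) (fst q) + B2 (snd p) (snd q)"

definition dsum :: "('a \<times> 'a) set \<Rightarrow> ('b \<times> 'b) set \<Rightarrow> (('a \<times> 'b) \<times> ('a \<times> 'b)) set" where
  "dsum A1 A2 = {((k1, k2), (h1, h2)) | k1 k2 h1 h2. (k1, h1) \<in> A1 \<and> (k2, h2) \<in> A2}"

end

theory Submission
  imports Defs
begin

text \<open>The sum of the two representations is a representation because
  \<open>\<Gamma>\<^sup>+(k\<^sub>1 [+] k\<^sub>2) = \<Gamma>\<^sub>1\<^sup>+ k\<^sub>1 + \<Gamma>\<^sub>2\<^sup>+ k\<^sub>2\<close> and the resolvent of
  \<open>A\<^sub>1 \<oplus> A\<^sub>2\<close> acts componentwise. For the density statements fix a fundamental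
  symmetry \<open>J\<close>: \<open>[x, J y]\<close> is a Hilbert inner product, so by the projection theorem a set has
  dense span iff only \<open>0\<close> is \<open>[\<cdot>,\<cdot>]\<close>-orthogonal to it. In (i) the spanning set contains
  every \<open>\<Gamma> h\<close> (take \<open>z = z\<^sub>0\<close>), so a vector orthogonal to it lies in the kernel of
  \<open>\<Gamma>\<^sup>+\<close>. In (ii) the hypothesis on \<open>f\<close> says that \<open>\<Gamma>\<^sub>0 f\<close> is orthogonal to a set
  with dense span, so \<open>\<Gamma>\<^sub>0 f = 0\<close>. Self-adjointness of the \<open>A\<^sub>i\<close>, \<open>Im z\<^sub>0 > 0\<close> and
  the finiteness of the negative index are never used.\<close>

locale chilbert_space =
  fixes scale :: "complex \<Rightarrow> 'a::banach \<Rightarrow> 'a" and ip :: "'a \<Rightarrow> 'a \<Rightarrow> complex"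
  assumes chilbert: "chilbert scale ip"
begin

lemma vector_space: "vector_space scale"
  and module: "module scale"
  and scale_of_real: "scale (complex_of_real r) x = r *\<^sub>R x"
  and norm_scale: "norm (scale c x) = cmod c * norm x"
  using chilbert by (simp_all add: chilbert_def cnvs_def module_iff_vector_space)

lemma ip_add_left: "ip (x + y) z = ip x z + ip y z"
  and ip_scale_left: "ip (scale c x) y = c * ip x y"
  and ip_cnj: "ip y x = cnj (ip x y)"
  and ip_self: "ip x x = complex_of_real ((norm x)\<^sup>2)"
  using chilbert unfolding chilbert_def sesq_def by blast+

lemma ip_add_right: "ip z (x + y) = ip z x + ip z y"
  by (metis ip_add_left ip_cnj complex_cnj_add)

lemma ip_scale_right: "ip y (scale c x) = cnj c * ip y x"
  by (metis ip_scale_left ip_cnj complex_cnj_mult)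

lemma scale_add_right: "scale c (x + y) = scale c x + scale c y"
  using vector_space by (simp add: vector_space_def)

lemma scale_scale: "scale a (scale b x) = scale (a * b) x"
  using vector_space by (simp add: vector_space_def)

lemma ip_minus_left: "ip (- x) y = - ip x y"
proof -
  have "- x = scale (complex_of_real (-1)) x"
    using scale_of_real[of "-1" x] by simp
  then show ?thesis
    by (simp add: ip_scale_left)
qed

lemma ip_diff_left: "ip (x - y) z = ip x z - ip y z"
  by (metis ip_add_left ip_minus_left diff_conv_add_uminus)

lemma ip_diff_right: "ip z (x - y) = ip z x - ip z y"
  by (metis ip_diff_left ip_cnj complex_cnj_diff)

lemma ip_zero_left: "ip 0 y = 0"
  by (metis ip_diff_left diff_self)

lemma eq_0_if_orthogonal_all: "(\<And>x. ip x v = 0) \<Longrightarrow> v = 0"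
  using ip_self[of v] by simp

lemma bounded_linear_scale: "bounded_linear (scale c)"
proof
  show "scale c (r *\<^sub>R x) = r *\<^sub>R scale c x" for r x
    by (metis scale_of_real scale_scale mult.commute)
  show "\<exists>K. \<forall>x. norm (scale c x) \<le> norm x * K"
    by (rule exI[of _ "cmod c"]) (simp add: norm_scale mult.commute)
qed (rule scale_add_right)

lemma polarization: "4 * ip y x = complex_of_real ((norm (y + x))\<^sup>2) - complex_of_real ((norm (y - x))\<^sup>2)
   + \<i> * complex_of_real ((norm (y + scale \<i> x))\<^sup>2) - \<i> * complex_of_real ((norm (y - scale \<i> x))\<^sup>2)"
  unfolding ip_self[symmetric] ip_add_left ip_add_right ip_diff_left ip_diff_right
    ip_scale_left ip_scale_right
  using ip_cnj[of x y] by (simp add: algebra_simps)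

lemma continuous_on_ip_left: "continuous_on UNIV (\<lambda>y. ip y x)"
proof -
  have eq: "(\<lambda>y. ip y x) = (\<lambda>y. (complex_of_real ((norm (y + x))\<^sup>2) - complex_of_real ((norm (y - x))\<^sup>2)
   + \<i> * complex_of_real ((norm (y + scale \<i> x))\<^sup>2) - \<i> * complex_of_real ((norm (y - scale \<i> x))\<^sup>2)) / 4)"
    using polarization by (auto simp: field_simps)
  show ?thesis
    by (subst eq) (intro continuous_intros, auto)
qed

lemma parallelogram:
  fixes a b :: 'a
  shows "(norm (a - b))\<^sup>2 + (norm (a + b))\<^sup>2 = 2 * (norm a)\<^sup>2 + 2 * (norm b)\<^sup>2"
proof -
  have "ip (a - b) (a - b) + ip (a + b) (a + b) = 2 * ip a a + 2 * ip b b"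
    by (simp add: ip_add_left ip_add_right ip_diff_left ip_diff_right)
  then have "Re (ip (a - b) (a - b) + ip (a + b) (a + b)) = Re (2 * ip a a + 2 * ip b b)"
    by simp
  then show ?thesis
    by (simp add: ip_self)
qed

lemma norm_diff_scaleR_squared:
  "(norm (x - t *\<^sub>R u))\<^sup>2 = (norm x)\<^sup>2 - 2 * t * Re (ip u x) + t\<^sup>2 * (norm u)\<^sup>2"
proof -
  have "complex_of_real ((norm (x - t *\<^sub>R u))\<^sup>2)
      = ip (x - scale (complex_of_real t) u) (x - scale (complex_of_real t) u)"
    by (simp add: ip_self scale_of_real)
  also have "\<dots> = ip x x - complex_of_real t * (ip u x + cnj (ip u x)) + complex_of_real t ^ 2 * ip u u"
    using ip_cnj[of u x] by (simp add: ip_diff_left ip_diff_right ip_scale_left ip_scale_right algebra_simps power2_eq_square)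
  also have "\<dots> = complex_of_real ((norm x)\<^sup>2 - 2 * t * Re (ip u x) + t\<^sup>2 * (norm u)\<^sup>2)"
    by (simp add: ip_self complex_add_cnj)
  finally show ?thesis
    using of_real_eq_iff by blast
qed

text \<open>If \<open>x\<close> is a shortest vector on the real line \<open>x + \<real> u\<close>, the quadratic
  \<open>t \<mapsto> \<parallel>x - t u\<parallel>\<^sup>2\<close> has its minimum at \<open>t = 0\<close>, so its linear coefficient vanishes.\<close>
lemma Re_ip_eq_0_if_minimal:
  assumes min: "\<And>t. norm x \<le> norm (x - t *\<^sub>R u)"
  shows "Re (ip u x) = 0"
proof (rule ccontr)
  define a where "a = Re (ip u x)"
  define c where "c = (norm u)\<^sup>2 + 1"
  assume "Re (ip u x) \<noteq> 0"
  then have "a * a > 0"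
    by (auto simp: a_def zero_less_mult_iff linorder_neq_iff)
  moreover have c: "c > 0"
    by (simp add: c_def add_nonneg_pos)
  ultimately have pos: "(a / c) * a > 0"
    by simp
  have "(norm x)\<^sup>2 \<le> (norm (x - (a / c) *\<^sub>R u))\<^sup>2"
    using min by (simp add: power_mono)
  then have "0 \<le> - 2 * (a / c) * a + (a / c)\<^sup>2 * (norm u)\<^sup>2"
    by (simp add: norm_diff_scaleR_squared a_def)
  also have "\<dots> \<le> - 2 * (a / c) * a + (a / c)\<^sup>2 * c"
    unfolding c_def by (intro add_left_mono mult_left_mono) auto
  also have "\<dots> = - (a / c) * a"
    using c by (simp add: power2_eq_square)
  finally show False
    using pos by simp
qed

text \<open>The midpoint of \<open>m k\<close> and \<open>m n\<close> lies in \<open>M\<close>, so the parallelogram law forces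
  \<open>m k\<close> and \<open>m n\<close> together.\<close>
lemma Cauchy_minimizing_sequence:
  fixes m :: "nat \<Rightarrow> 'a"
  assumes midpoint: "\<And>a b. a \<in> M \<Longrightarrow> b \<in> M \<Longrightarrow> (1/2) *\<^sub>R (a + b) \<in> M"
    and m_in: "\<And>n. m n \<in> M"
    and m_close: "\<And>n. (dist y (m n))\<^sup>2 < (infdist y M)\<^sup>2 + inverse (Suc n)"
  shows "Cauchy m"
proof (rule metric_CauchyI)
  define d where "d = infdist y M"
  have m_diff: "(norm (m k - m n))\<^sup>2 \<le> 2 * inverse (Suc n) + 2 * inverse (Suc k)" for k n
  proof -
    have "d \<le> dist y ((1/2) *\<^sub>R (m n + m k))"
      unfolding d_def using m_in by (intro infdist_le midpoint)
    also have "\<dots> = (1/2) * norm ((y - m n) + (y - m k))"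
    proof -
      have "(y - m n) + (y - m k) = 2 *\<^sub>R (y - (1/2) *\<^sub>R (m n + m k))"
        by (simp add: algebra_simps scaleR_2)
      then show ?thesis
        by (simp add: dist_norm)
    qed
    finally have "4 * d\<^sup>2 \<le> (norm ((y - m n) + (y - m k)))\<^sup>2"
      using infdist_nonneg[of y M] power_mono[of "2 * d" _ 2] by (simp add: d_def power_mult_distrib)
    moreover have "(norm (m k - m n))\<^sup>2
        = 2 * (norm (y - m n))\<^sup>2 + 2 * (norm (y - m k))\<^sup>2 - (norm ((y - m n) + (y - m k)))\<^sup>2"
      using parallelogram[of "y - m n" "y - m k"] by simp
    ultimately show ?thesis
      using m_close[of n] m_close[of k] by (simp add: d_def dist_norm)
  qed
  fix e :: real
  assume "e > 0"
  then obtain N where N: "inverse (real (Suc N)) < e\<^sup>2 / 4"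
    using reals_Archimedean[of "e\<^sup>2 / 4"] by auto
  have "dist (m k) (m n) < e" if "k \<ge> N" "n \<ge> N" for k n
  proof -
    have "inverse (real (Suc n)) \<le> inverse (Suc N)" "inverse (real (Suc k)) \<le> inverse (Suc N)"
      using that by (simp_all add: le_imp_inverse_le)
    then have "(norm (m k - m n))\<^sup>2 < e\<^sup>2"
      using m_diff[of k n] N by linarith
    then show ?thesis
      using \<open>e > 0\<close> by (simp add: dist_norm power_less_imp_less_base)
  qed
  then show "\<exists>N. \<forall>k\<ge>N. \<forall>n\<ge>N. dist (m k) (m n) < e"
    by blast
qed

lemma closed_subspace_nearest_point:
  assumes closed: "closed M" and subspace: "module.subspace scale M"
  obtains L where "L \<in> M" "\<And>u. u \<in> M \<Longrightarrow> dist y L \<le> dist y u"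
proof -
  have M0: "0 \<in> M" and M_add: "\<And>a b. a \<in> M \<Longrightarrow> b \<in> M \<Longrightarrow> a + b \<in> M"
    and M_scaleR: "\<And>r a. a \<in> M \<Longrightarrow> r *\<^sub>R a \<in> M"
    using subspace module.subspace_0 module.subspace_add module.subspace_scale module scale_of_real
    by metis+
  define d where "d = infdist y M"
  have "\<exists>m\<in>M. (dist y m)\<^sup>2 < d\<^sup>2 + inverse (Suc n)" for n
  proof -
    have "d < sqrt (d\<^sup>2 + inverse (Suc n))"
      by (rule real_less_rsqrt) simp
    moreover have "d = (INF u\<in>M. dist y u)"
      using infdist_notempty[of M y] M0 by (auto simp: d_def)
    ultimately obtain m where "m \<in> M" "dist y m < sqrt (d\<^sup>2 + inverse (Suc n))"
      using cINF_less_iff[OF _ bdd_below_image_dist] M0 by (metis empty_iff)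
    then show ?thesis
      by (metis real_sqrt_less_iff real_sqrt_power zero_le_dist real_sqrt_abs abs_of_nonneg power2_eq_square)
  qed
  then obtain m where m_in: "\<And>n. m n \<in> M"
    and m_close: "\<And>n. (dist y (m n))\<^sup>2 < d\<^sup>2 + inverse (Suc n)"
    by metis
  have "Cauchy m"
    using M_scaleR M_add m_in m_close unfolding d_def by (intro Cauchy_minimizing_sequence[where M = M and y = y]) auto
  then obtain L where L: "m \<longlonglongrightarrow> L"
    using Cauchy_convergent convergent_def by blast
  have "(dist y L)\<^sup>2 \<le> d\<^sup>2"
  proof (rule LIMSEQ_le)
    show "(\<lambda>n. (dist y (m n))\<^sup>2) \<longlonglongrightarrow> (dist y L)\<^sup>2"
      by (intro tendsto_intros L)
    show "(\<lambda>n. d\<^sup>2 + inverse (real (Suc n))) \<longlonglongrightarrow> d\<^sup>2"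
      using tendsto_add[OF tendsto_const LIMSEQ_inverse_real_of_nat] by simp
  qed (use m_close less_imp_le in blast)
  then have "dist y L \<le> d"
    using infdist_nonneg[of y M] power2_le_imp_le by (auto simp: d_def)
  moreover have "\<And>u. u \<in> M \<Longrightarrow> d \<le> dist y u"
    unfolding d_def by (rule infdist_le)
  ultimately show ?thesis
    using that closed_sequentially[OF closed] m_in L by (meson order_trans)
qed

lemma orthogonal_to_proper_closed_subspace:
  assumes closed: "closed M" and subspace: "module.subspace scale M" and "y \<notin> M"
  obtains x where "x \<noteq> 0" "\<And>u. u \<in> M \<Longrightarrow> ip u x = 0"
proof -
  obtain L where "L \<in> M" and L: "\<And>u. u \<in> M \<Longrightarrow> dist y L \<le> dist y u"
    using closed_subspace_nearest_point[OF closed subspace, where y = y] by blast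
  have M_add: "\<And>a b. a \<in> M \<Longrightarrow> b \<in> M \<Longrightarrow> a + b \<in> M"
    and M_scale: "\<And>c a. a \<in> M \<Longrightarrow> scale c a \<in> M"
    using subspace module.subspace_add module.subspace_scale module by metis+
  have minimal: "norm (y - L) \<le> norm (y - L - t *\<^sub>R u)" if "u \<in> M" for u t
    using L[of "L + t *\<^sub>R u"] \<open>L \<in> M\<close> that M_add M_scale[of u "complex_of_real t"]
    by (simp add: dist_norm scale_of_real algebra_simps)
  have "ip u (y - L) = 0" if "u \<in> M" for u
  proof -
    have "Re (ip u (y - L)) = 0"
      using minimal[OF that] by (rule Re_ip_eq_0_if_minimal)
    moreover have "Re (ip (scale \<i> u) (y - L)) = 0"
      using minimal[OF M_scale[OF that]] by (rule Re_ip_eq_0_if_minimal)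
    ultimately show ?thesis
      by (simp add: ip_scale_left complex_eq_iff)
  qed
  moreover have "y - L \<noteq> 0"
    using \<open>y \<notin> M\<close> \<open>L \<in> M\<close> by auto
  ultimately show ?thesis
    using that by blast
qed

lemma subspace_closure:
  assumes V: "module.subspace scale V"
  shows "module.subspace scale (closure V)"
proof (rule module.subspaceI[OF module])
  show "0 \<in> closure V"
    using V module.subspace_0[OF module] closure_subset by blast
  show "x + y \<in> closure V" if xy: "x \<in> closure V" "y \<in> closure V" for x y
  proof -
    obtain f g where "\<And>n. f n \<in> V" "f \<longlonglongrightarrow> x" "\<And>n. g n \<in> V" "g \<longlonglongrightarrow> y"
      using xy unfolding closure_sequential by metis
    then show ?thesis
      unfolding closure_sequential
      by (intro exI[of _ "\<lambda>n. f n + g n"]) (auto intro: tendsto_add module.subspace_add[OF module V])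
  qed
  show "scale c x \<in> closure V" if x: "x \<in> closure V" for c x
  proof -
    obtain f where "\<And>n. f n \<in> V" "f \<longlonglongrightarrow> x"
      using x unfolding closure_sequential by metis
    then show ?thesis
      unfolding closure_sequential
      by (intro exI[of _ "\<lambda>n. scale c (f n)"])
        (auto intro: bounded_linear.tendsto[OF bounded_linear_scale] module.subspace_scale[OF module V])
  qed
qed

lemma dense_span_iff:
  "closure (module.span scale S) = UNIV \<longleftrightarrow> (\<forall>x. (\<forall>s\<in>S. ip s x = 0) \<longrightarrow> x = 0)"
proof
  assume dense: "closure (module.span scale S) = UNIV"
  show "\<forall>x. (\<forall>s\<in>S. ip s x = 0) \<longrightarrow> x = 0"
  proof (intro allI impI)
    fix x
    assume S_orth: "\<forall>s\<in>S. ip s x = 0"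
    have kernel: "module.subspace scale {u. ip u x = 0}"
      by (rule module.subspaceI[OF module]) (auto simp: ip_zero_left ip_add_left ip_scale_left)
    have "module.span scale S \<subseteq> {u. ip u x = 0}"
      using module.span_minimal[OF module _ kernel] S_orth by blast
    moreover have "closed {u. ip u x = 0}"
      using closed_Collect_eq[OF continuous_on_ip_left continuous_on_const] .
    ultimately have "closure (module.span scale S) \<subseteq> {u. ip u x = 0}"
      by (rule closure_minimal)
    then have "ip x x = 0"
      using dense by blast
    then show "x = 0"
      by (simp add: ip_self)
  qed
next
  assume orth: "\<forall>x. (\<forall>s\<in>S. ip s x = 0) \<longrightarrow> x = 0"
  show "closure (module.span scale S) = UNIV"
  proof (rule ccontr)
    assume "closure (module.span scale S) \<noteq> UNIV"
    then obtain y where "y \<notin> closure (module.span scale S)"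
      by blast
    then obtain x where "x \<noteq> 0" "\<And>u. u \<in> closure (module.span scale S) \<Longrightarrow> ip u x = 0"
      using orthogonal_to_proper_closed_subspace[OF closed_closure
          subspace_closure[OF module.subspace_span[OF module]]] by blast
    moreover have "S \<subseteq> closure (module.span scale S)"
      using module.span_superset[OF module] closure_subset by blast
    ultimately show False
      using orth by blast
  qed
qed

end

lemma vector_space_prod_sm:
  assumes "vector_space s1" "vector_space s2"
  shows "vector_space (prod_sm s1 s2)"
proof -
  interpret v1: vector_space s1 by (rule assms(1))
  interpret v2: vector_space s2 by (rule assms(2))
  show ?thesis
    by unfold_locales (simp_all add: prod_sm_def v1.scale_right_distrib v2.scale_right_distrib
        v1.scale_left_distrib v2.scale_left_distrib)
qed

lemma chilbert_psum:
  fixes s1 :: "complex \<Rightarrow> 'a::banach \<Rightarrow> 'a" and s2 :: "complex \<Rightarrow> 'b::banach \<Rightarrow> 'b"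
  assumes "chilbert s1 P1" "chilbert s2 P2"
  shows "chilbert (prod_sm s1 s2) (psum P1 P2)"
proof -
  interpret H1: chilbert_space s1 P1 by unfold_locales (rule assms(1))
  interpret H2: chilbert_space s2 P2 by unfold_locales (rule assms(2))
  have "norm (prod_sm s1 s2 c x) = cmod c * norm x" for c and x :: "'a \<times> 'b"
  proof -
    have "(norm (prod_sm s1 s2 c x))\<^sup>2 = (cmod c * norm x)\<^sup>2"
      by (cases x) (simp add: prod_sm_def norm_Pair H1.norm_scale H2.norm_scale power_mult_distrib algebra_simps)
    then show ?thesis
      by (simp add: power2_eq_iff_nonneg)
  qed
  then have "cnvs (prod_sm s1 s2)"
    unfolding cnvs_def using vector_space_prod_sm[OF H1.vector_space H2.vector_space]
    by (simp add: prod_sm_def H1.scale_of_real H2.scale_of_real)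
  moreover have "psum P1 P2 x x = complex_of_real ((norm x)\<^sup>2)" for x :: "'a \<times> 'b"
    by (cases x) (simp add: psum_def H1.ip_self H2.ip_self norm_Pair del: of_real_power flip: of_real_add)
  ultimately show ?thesis
    unfolding chilbert_def sesq_def
    by (simp add: psum_def prod_sm_def H1.ip_add_left H2.ip_add_left H1.ip_scale_left H2.ip_scale_left
        algebra_simps flip: H1.ip_cnj H2.ip_cnj)
qed

definition fundamental_symmetry ::
    "(complex \<Rightarrow> 'k::banach \<Rightarrow> 'k) \<Rightarrow> ('k \<Rightarrow> 'k \<Rightarrow> complex) \<Rightarrow> ('k \<Rightarrow> 'k) \<Rightarrow> bool" where
  "fundamental_symmetry sm B J \<longleftrightarrow> (\<forall>x. J (J x) = x) \<and> (\<forall>x y. B (J x) y = B x (J y))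
     \<and> chilbert sm (\<lambda>x y. B x (J y))"

lemma pontryagin_fundamental_symmetry:
  assumes "pontryagin sm B"
  obtains J where "fundamental_symmetry sm B J"
proof -
  obtain J where J: "\<And>x. J (J x) = x" "\<And>x y. B (J x) y = B x (J y)"
    "\<And>x. B x (J x) = complex_of_real ((norm x)\<^sup>2)"
    using assms unfolding pontryagin_def by blast
  have "cnvs sm" and "sesq sm B"
    using assms by (auto simp: pontryagin_def)
  then have "chilbert sm (\<lambda>x y. B x (J y))"
    unfolding chilbert_def sesq_def using J by metis
  then show ?thesis
    using J that unfolding fundamental_symmetry_def by blast
qed

lemma fundamental_symmetry_psum:
  assumes "fundamental_symmetry s1 B1 J1" "fundamental_symmetry s2 B2 J2"
  shows "fundamental_symmetry (prod_sm s1 s2) (psum B1 B2) (map_prod J1 J2)"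
proof -
  have "(\<lambda>x y. psum B1 B2 x (map_prod J1 J2 y)) = psum (\<lambda>x y. B1 x (J1 y)) (\<lambda>x y. B2 x (J2 y))"
    by (simp add: psum_def fun_eq_iff)
  then show ?thesis
    using assms chilbert_psum unfolding fundamental_symmetry_def by (auto simp: psum_def)
qed

lemma fundamental_symmetry_hermitian:
  assumes "fundamental_symmetry sm B J"
  shows "B y x = cnj (B x y)"
proof -
  interpret chilbert_space sm "\<lambda>x y. B x (J y)"
    using assms by unfold_locales (simp add: fundamental_symmetry_def)
  have J: "J (J x) = x" "B (J x) y = B x (J y)" for x y
    using assms by (simp_all add: fundamental_symmetry_def)
  show ?thesis
    using ip_cnj[of "J x" y] by (simp add: J)
qed

lemma fundamental_symmetry_zero:
  assumes "fundamental_symmetry sm B J"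
  shows "B x 0 = 0" and "J 0 = 0"
proof -
  interpret chilbert_space sm "\<lambda>x y. B x (J y)"
    using assms by unfold_locales (simp add: fundamental_symmetry_def)
  have J: "J (J x) = x" for x
    using assms by (simp add: fundamental_symmetry_def)
  show B0: "B x 0 = 0" for x
    using ip_zero_left[of "J x"] fundamental_symmetry_hermitian[OF assms, of x 0] by (simp add: J)
  show "J 0 = 0"
    using B0 by (intro eq_0_if_orthogonal_all) (simp add: J)
qed

lemma fundamental_symmetry_dense_span_iff:
  assumes "fundamental_symmetry sm B J"
  shows "closure (module.span sm S) = UNIV \<longleftrightarrow> (\<forall>x. (\<forall>s\<in>S. B s x = 0) \<longrightarrow> x = 0)"
proof -
  interpret chilbert_space sm "\<lambda>x y. B x (J y)"
    using assms by unfold_locales (simp add: fundamental_symmetry_def)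
  have "J (J x) = x" for x
    using assms by (simp add: fundamental_symmetry_def)
  then have "(\<forall>x. (\<forall>s\<in>S. B s (J x) = 0) \<longrightarrow> x = 0) \<longleftrightarrow> (\<forall>x. (\<forall>s\<in>S. B s x = 0) \<longrightarrow> x = 0)"
    using fundamental_symmetry_zero(2)[OF assms] by metis
  then show ?thesis
    by (simp add: dense_span_iff)
qed

lemma kadj_eqI:
  assumes "chilbert smH ip" and "\<And>h k. ip h (G' k) = B (G h) k"
  shows "kadj ip B G = G'"
  unfolding kadj_def
proof (rule the_equality)
  interpret chilbert_space smH ip by unfold_locales (rule assms(1))
  fix G''
  assume G'': "\<forall>h k. ip h (G'' k) = B (G h) k"
  show "G'' = G'"
  proof
    fix k
    have "G'' k - G' k = 0"
      using G'' assms(2) by (intro eq_0_if_orthogonal_all) (simp add: ip_diff_right)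
    then show "G'' k = G' k"
      by simp
  qed
qed (use assms(2) in blast)

lemma kadj_ip:
  assumes "chilbert smH ip" and "has_kadj ip B G"
  shows "ip h (kadj ip B G k) = B (G h) k"
  using assms kadj_eqI unfolding has_kadj_def by metis

lemma kadj_pair:
  assumes H: "chilbert smH ip" and G1: "has_kadj ip B1 G1" and G2: "has_kadj ip B2 G2"
  shows "has_kadj ip (psum B1 B2) (\<lambda>h. (G1 h, G2 h))"
    and "kadj ip (psum B1 B2) (\<lambda>h. (G1 h, G2 h)) = (\<lambda>k. kadj ip B1 G1 (fst k) + kadj ip B2 G2 (snd k))"
proof -
  interpret chilbert_space smH ip by unfold_locales (rule H)
  have adj: "ip h (kadj ip B1 G1 (fst k) + kadj ip B2 G2 (snd k)) = psum B1 B2 (G1 h, G2 h) k" for h k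
    by (simp add: ip_add_right kadj_ip[OF H G1] kadj_ip[OF H G2] psum_def)
  then show "has_kadj ip (psum B1 B2) (\<lambda>h. (G1 h, G2 h))"
    unfolding has_kadj_def
    by (intro exI[of _ "\<lambda>k. kadj ip B1 G1 (fst k) + kadj ip B2 G2 (snd k)"]) simp
  show "kadj ip (psum B1 B2) (\<lambda>h. (G1 h, G2 h)) = (\<lambda>k. kadj ip B1 G1 (fst k) + kadj ip B2 G2 (snd k))"
    by (rule kadj_eqI[OF H]) (rule adj)
qed

lemma kadj_zero:
  assumes "chilbert smH ip" and "has_kadj ip B G" and "fundamental_symmetry sm B J"
  shows "kadj ip B G 0 = 0"
proof -
  interpret chilbert_space smH ip by unfold_locales (rule assms(1))
  show ?thesis
    by (intro eq_0_if_orthogonal_all)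
      (simp add: kadj_ip[OF assms(1,2)] fundamental_symmetry_zero(1)[OF assms(3)])
qed

lemma dense_span_if_kadj_inj:
  assumes H: "chilbert smH ip" and J: "fundamental_symmetry sm B J"
    and G: "has_kadj ip B G" and inj: "inj (kadj ip B G)" and S: "range G \<subseteq> S"
  shows "closure (module.span sm S) = UNIV"
proof -
  interpret chilbert_space smH ip by unfold_locales (rule H)
  have "x = 0" if "\<forall>s\<in>S. B s x = 0" for x
  proof -
    have "kadj ip B G x = 0"
      using that S by (intro eq_0_if_orthogonal_all) (auto simp: kadj_ip[OF H G])
    then show ?thesis
      using inj kadj_zero[OF H G J] by (metis injD)
  qed
  then show ?thesis
    using fundamental_symmetry_dense_span_iff[OF J] by blast
qed

lemma kadj_orthogonal_dense_imp_eq_0: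
  assumes H: "chilbert smH ip" and J: "fundamental_symmetry sm B J" and G: "has_kadj ip B G"
    and dense: "closure (module.span sm S) = UNIV" and orth: "\<And>s. s \<in> S \<Longrightarrow> ip f (kadj ip B G s) = 0"
  shows "G f = 0"
proof -
  have "B s (G f) = 0" if "s \<in> S" for s
    using orth[OF that] fundamental_symmetry_hermitian[OF J, of "G f" s] by (simp add: kadj_ip[OF H G])
  then show ?thesis
    using dense fundamental_symmetry_dense_span_iff[OF J] by blast
qed

lemma dsum_shift_iff:
  "(f, k + prod_sm s1 s2 z f) \<in> dsum A1 A2 \<longleftrightarrow>
     (fst f, fst k + s1 z (fst f)) \<in> A1 \<and> (snd f, snd k + s2 z (snd f)) \<in> A2"
  by (cases f, cases k) (auto simp: dsum_def prod_sm_def)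

lemma dsum_resolvent_uniqueD:
  fixes s1 :: "complex \<Rightarrow> 'a::monoid_add \<Rightarrow> 'a" and s2 :: "complex \<Rightarrow> 'b::monoid_add \<Rightarrow> 'b"
  assumes prod: "\<forall>k. \<exists>!f. (f, k + prod_sm s1 s2 z f) \<in> dsum A1 A2"
  shows "\<forall>k. \<exists>!f. (f, k + s1 z f) \<in> A1" and "\<forall>k. \<exists>!f. (f, k + s2 z f) \<in> A2"
proof -
  show "\<forall>k. \<exists>!f. (f, k + s1 z f) \<in> A1"
  proof
    fix k1
    obtain f where f: "(f, (k1, 0) + prod_sm s1 s2 z f) \<in> dsum A1 A2"
      using prod by blast
    then have f1: "(fst f, k1 + s1 z (fst f)) \<in> A1" and f2: "(snd f, s2 z (snd f)) \<in> A2"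
      by (simp_all add: dsum_shift_iff)
    have "g = fst f" if "(g, k1 + s1 z g) \<in> A1" for g
    proof -
      have "((g, snd f), (k1, 0) + prod_sm s1 s2 z (g, snd f)) \<in> dsum A1 A2"
        using that f2 by (simp add: dsum_shift_iff)
      with f have "(g, snd f) = f"
        using prod[rule_format, of "(k1, 0)"] by (blast elim: ex1E)
      then show ?thesis
        by (metis fst_conv)
    qed
    with f1 show "\<exists>!f. (f, k1 + s1 z f) \<in> A1"
      by (rule ex1I)
  qed
  show "\<forall>k. \<exists>!f. (f, k + s2 z f) \<in> A2"
  proof
    fix k2
    obtain f where f: "(f, (0, k2) + prod_sm s1 s2 z f) \<in> dsum A1 A2"
      using prod by blast
    then have f1: "(fst f, s1 z (fst f)) \<in> A1" and f2: "(snd f, k2 + s2 z (snd f)) \<in> A2"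
      by (simp_all add: dsum_shift_iff)
    have "g = snd f" if "(g, k2 + s2 z g) \<in> A2" for g
    proof -
      have "((fst f, g), (0, k2) + prod_sm s1 s2 z (fst f, g)) \<in> dsum A1 A2"
        using that f1 by (simp add: dsum_shift_iff)
      with f have "(fst f, g) = f"
        using prod[rule_format, of "(0, k2)"] by (blast elim: ex1E)
      then show ?thesis
        by (metis snd_conv)
    qed
    with f2 show "\<exists>!f. (f, k2 + s2 z f) \<in> A2"
      by (rule ex1I)
  qed
qed

lemma dsum_resolvent_uniqueI:
  fixes s1 :: "complex \<Rightarrow> 'a::monoid_add \<Rightarrow> 'a" and s2 :: "complex \<Rightarrow> 'b::monoid_add \<Rightarrow> 'b"
  assumes one: "\<forall>k. \<exists>!f. (f, k + s1 z f) \<in> A1" and two: "\<forall>k. \<exists>!f. (f, k + s2 z f) \<in> A2"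
  shows "\<forall>k. \<exists>!f. (f, k + prod_sm s1 s2 z f) \<in> dsum A1 A2"
proof
  fix k :: "'a \<times> 'b"
  obtain f1 where f1: "(f1, fst k + s1 z f1) \<in> A1" "\<And>g. (g, fst k + s1 z g) \<in> A1 \<Longrightarrow> g = f1"
    using one[rule_format, of "fst k"] by blast
  obtain f2 where f2: "(f2, snd k + s2 z f2) \<in> A2" "\<And>g. (g, snd k + s2 z g) \<in> A2 \<Longrightarrow> g = f2"
    using two[rule_format, of "snd k"] by blast
  show "\<exists>!f. (f, k + prod_sm s1 s2 z f) \<in> dsum A1 A2"
  proof (rule ex1I)
    show "((f1, f2), k + prod_sm s1 s2 z (f1, f2)) \<in> dsum A1 A2"
      using f1(1) f2(1) by (simp add: dsum_shift_iff)
    show "g = (f1, f2)" if "(g, k + prod_sm s1 s2 z g) \<in> dsum A1 A2" for g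
      using that f1(2) f2(2) by (simp add: dsum_shift_iff prod_eq_iff)
  qed
qed

lemma resolv_dsum:
  fixes s1 :: "complex \<Rightarrow> 'a::monoid_add \<Rightarrow> 'a" and s2 :: "complex \<Rightarrow> 'b::monoid_add \<Rightarrow> 'b"
  assumes "\<forall>k. \<exists>!f. (f, k + prod_sm s1 s2 z f) \<in> dsum A1 A2"
  shows "resolv (prod_sm s1 s2) (dsum A1 A2) z k = (resolv s1 A1 z (fst k), resolv s2 A2 z (snd k))"
proof -
  have u1: "\<forall>k. \<exists>!f. (f, k + s1 z f) \<in> A1" and u2: "\<forall>k. \<exists>!f. (f, k + s2 z f) \<in> A2"
    using dsum_resolvent_uniqueD[OF assms] by blast+
  have "(resolv s1 A1 z (fst k), fst k + s1 z (resolv s1 A1 z (fst k))) \<in> A1"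
    and "(resolv s2 A2 z (snd k), snd k + s2 z (resolv s2 A2 z (snd k))) \<in> A2"
    unfolding resolv_def by (rule theI'[OF u1[rule_format]], rule theI'[OF u2[rule_format]])
  then have "((resolv s1 A1 z (fst k), resolv s2 A2 z (snd k)),
      k + prod_sm s1 s2 z (resolv s1 A1 z (fst k), resolv s2 A2 z (snd k))) \<in> dsum A1 A2"
    by (simp add: dsum_shift_iff)
  then show ?thesis
    unfolding resolv_def[of "prod_sm s1 s2"] by (rule the1_equality[OF assms[rule_format]])
qed

lemma cbounded_map_prod:
  fixes s1 :: "complex \<Rightarrow> 'a::real_normed_vector \<Rightarrow> 'a" and s2 :: "complex \<Rightarrow> 'b::real_normed_vector \<Rightarrow> 'b"
  assumes f: "cbounded s1 s1 f" and g: "cbounded s2 s2 g"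
  shows "cbounded (prod_sm s1 s2) (prod_sm s1 s2) (map_prod f g)"
proof -
  have lin_f: "vector_space s1" "\<And>x y. f (x + y) = f x + f y" "\<And>c x. f (s1 c x) = s1 c (f x)"
    and lin_g: "vector_space s2" "\<And>x y. g (x + y) = g x + g y" "\<And>c x. g (s2 c x) = s2 c (g x)"
    using f g by (simp_all add: cbounded_def Vector_Spaces.linear_iff)
  obtain C1 C2 where C1: "\<And>x. norm (f x) \<le> C1 * norm x" and C2: "\<And>x. norm (g x) \<le> C2 * norm x"
    using f g by (auto simp: cbounded_def)
  have "Vector_Spaces.linear (prod_sm s1 s2) (prod_sm s1 s2) (map_prod f g)"
    unfolding Vector_Spaces.linear_iff
    using vector_space_prod_sm[OF lin_f(1) lin_g(1)] by (simp add: lin_f lin_g prod_sm_def map_prod_def)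
  moreover have "norm (map_prod f g k) \<le> (\<bar>C1\<bar> + \<bar>C2\<bar>) * norm k" for k
  proof -
    have "norm (map_prod f g k) \<le> norm (f (fst k)) + norm (g (snd k))"
      by (cases k) (simp add: norm_Pair_le)
    also have "\<dots> \<le> \<bar>C1\<bar> * norm (fst k) + \<bar>C2\<bar> * norm (snd k)"
      using C1[of "fst k"] C2[of "snd k"]
        mult_right_mono[OF abs_ge_self[of C1] norm_ge_zero[of "fst k"]]
        mult_right_mono[OF abs_ge_self[of C2] norm_ge_zero[of "snd k"]]
      by linarith
    also have "\<dots> \<le> (\<bar>C1\<bar> + \<bar>C2\<bar>) * norm k"
      using norm_fst_le[of "fst k" "snd k"] norm_snd_le[of "snd k" "fst k"]
      by (simp add: distrib_right add_mono mult_left_mono)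
    finally show ?thesis .
  qed
  ultimately show ?thesis
    unfolding cbounded_def by blast
qed

lemma rset_dsum:
  fixes s1 :: "complex \<Rightarrow> 'a::real_normed_vector \<Rightarrow> 'a" and s2 :: "complex \<Rightarrow> 'b::real_normed_vector \<Rightarrow> 'b"
  assumes "z \<in> rset s1 A1" "z \<in> rset s2 A2"
  shows "z \<in> rset (prod_sm s1 s2) (dsum A1 A2)"
proof -
  have unique: "\<forall>k. \<exists>!f. (f, k + prod_sm s1 s2 z f) \<in> dsum A1 A2"
    using assms by (intro dsum_resolvent_uniqueI) (simp_all add: rset_def)
  then have "resolv (prod_sm s1 s2) (dsum A1 A2) z = map_prod (resolv s1 A1 z) (resolv s2 A2 z)"
    by (simp add: resolv_dsum fun_eq_iff map_prod_def split_beta)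
  moreover have "cbounded (prod_sm s1 s2) (prod_sm s1 s2) (map_prod (resolv s1 A1 z) (resolv s2 A2 z))"
    using assms by (intro cbounded_map_prod) (simp_all add: rset_def)
  ultimately show ?thesis
    using unique by (simp add: rset_def)
qed

lemma representation_dsum:
  assumes H: "chilbert smH ip" and G1: "has_kadj ip B1 \<Gamma>1" and G2: "has_kadj ip B2 \<Gamma>2"
    and z: "z \<in> rset sm1 A1" "z \<in> rset sm2 A2"
  shows "smH w (kadj ip (psum B1 B2) (\<lambda>h. (\<Gamma>1 h, \<Gamma>2 h))
            ((\<Gamma>1 h, \<Gamma>2 h) + prod_sm sm1 sm2 c (resolv (prod_sm sm1 sm2) (dsum A1 A2) z (\<Gamma>1 h, \<Gamma>2 h))))
       = smH w (kadj ip B1 \<Gamma>1 (\<Gamma>1 h + sm1 c (resolv sm1 A1 z (\<Gamma>1 h))))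
         + smH w (kadj ip B2 \<Gamma>2 (\<Gamma>2 h + sm2 c (resolv sm2 A2 z (\<Gamma>2 h))))"
proof -
  interpret chilbert_space smH ip by unfold_locales (rule H)
  have "\<forall>k. \<exists>!f. (f, k + prod_sm sm1 sm2 z f) \<in> dsum A1 A2"
    using rset_dsum[OF z] by (simp add: rset_def)
  then show ?thesis
    by (simp add: resolv_dsum kadj_pair(2)[OF H G1 G2] prod_sm_def scale_add_right)
qed

lemma representation_dsum_minimal:
  assumes H: "chilbert smH ip"
    and J1: "fundamental_symmetry sm1 B1 J1" and J2: "fundamental_symmetry sm2 B2 J2"
    and G1: "has_kadj ip B1 \<Gamma>1" and G2: "has_kadj ip B2 \<Gamma>2"
    and z0: "z0 \<in> rset sm1 A1" "z0 \<in> rset sm2 A2"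
    and inj: "inj (kadj ip (psum B1 B2) (\<lambda>h. (\<Gamma>1 h, \<Gamma>2 h)))"
  shows "closure (module.span (prod_sm sm1 sm2)
      {(\<Gamma>1 h, \<Gamma>2 h) + prod_sm sm1 sm2 (z - z0) (resolv (prod_sm sm1 sm2) (dsum A1 A2) z (\<Gamma>1 h, \<Gamma>2 h)) | z h.
         z \<in> rset (prod_sm sm1 sm2) (dsum A1 A2)}) = UNIV"
proof (rule dense_span_if_kadj_inj[OF H fundamental_symmetry_psum[OF J1 J2] kadj_pair(1)[OF H G1 G2] inj])
  interpret H1: chilbert_space sm1 "\<lambda>x y. B1 x (J1 y)"
    using J1 by unfold_locales (simp add: fundamental_symmetry_def)
  interpret H2: chilbert_space sm2 "\<lambda>x y. B2 x (J2 y)"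
    using J2 by unfold_locales (simp add: fundamental_symmetry_def)
  have "(\<Gamma>1 h, \<Gamma>2 h) = (\<Gamma>1 h, \<Gamma>2 h) + prod_sm sm1 sm2 (z0 - z0) k" for h k
    by (simp add: prod_sm_def module.scale_zero_left[OF H1.module] module.scale_zero_left[OF H2.module])
  then show "range (\<lambda>h. (\<Gamma>1 h, \<Gamma>2 h)) \<subseteq> {(\<Gamma>1 h, \<Gamma>2 h) + prod_sm sm1 sm2 (z - z0)
      (resolv (prod_sm sm1 sm2) (dsum A1 A2) z (\<Gamma>1 h, \<Gamma>2 h)) | z h. z \<in> rset (prod_sm sm1 sm2) (dsum A1 A2)}"
    using rset_dsum[OF z0] by blast
qed

lemma representation_dsum_orthogonal_imp_eq_0:
  assumes H: "chilbert smH ip"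
    and J1: "fundamental_symmetry sm1 B1 J1" and J2: "fundamental_symmetry sm2 B2 J2"
    and G1: "has_kadj ip B1 \<Gamma>1" and G2: "has_kadj ip B2 \<Gamma>2"
    and dense: "closure (module.span (prod_sm sm1 sm2)
           {resolv (prod_sm sm1 sm2) (dsum A1 A2) z (\<Gamma>1 h, \<Gamma>2 h) | z h.
              z \<in> rset (prod_sm sm1 sm2) (dsum A1 A2)}) = UNIV"
    and orth: "\<forall>z \<in> rset (prod_sm sm1 sm2) (dsum A1 A2). \<forall>h.
        ip f (kadj ip B1 \<Gamma>1 (resolv sm1 A1 z (\<Gamma>1 h)) + kadj ip B2 \<Gamma>2 (resolv sm2 A2 z (\<Gamma>2 h))) = 0"
  shows "\<Gamma>1 f = 0" and "\<Gamma>2 f = 0"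
proof -
  have "ip f (kadj ip (psum B1 B2) (\<lambda>h. (\<Gamma>1 h, \<Gamma>2 h)) s) = 0"
    if "s \<in> {resolv (prod_sm sm1 sm2) (dsum A1 A2) z (\<Gamma>1 h, \<Gamma>2 h) | z h.
              z \<in> rset (prod_sm sm1 sm2) (dsum A1 A2)}" for s
    using that orth by (auto simp: kadj_pair(2)[OF H G1 G2] resolv_dsum rset_def)
  then have "(\<Gamma>1 f, \<Gamma>2 f) = 0"
    by (intro kadj_orthogonal_dense_imp_eq_0[OF H fundamental_symmetry_psum[OF J1 J2]
          kadj_pair(1)[OF H G1 G2] dense])
  then show "\<Gamma>1 f = 0" and "\<Gamma>2 f = 0"
    by (simp_all add: zero_prod_def)
qed

lemma cbounded_zero: "cbounded s1 s2 T \<Longrightarrow> T 0 = 0"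
  unfolding cbounded_def Vector_Spaces.linear_def by (blast intro: module_hom.zero)

theorem lemma4:
  fixes smH :: "complex \<Rightarrow> 'h::banach \<Rightarrow> 'h" and ip :: "'h \<Rightarrow> 'h \<Rightarrow> complex"
    and sm1 :: "complex \<Rightarrow> 'k1::banach \<Rightarrow> 'k1" and B1 :: "'k1 \<Rightarrow> 'k1 \<Rightarrow> complex"
    and sm2 :: "complex \<Rightarrow> 'k2::banach \<Rightarrow> 'k2" and B2 :: "'k2 \<Rightarrow> 'k2 \<Rightarrow> complex"
    and A1 :: "('k1 \<times> 'k1) set" and A2 :: "('k2 \<times> 'k2) set"
    and \<Gamma>1 :: "'h \<Rightarrow> 'k1" and \<Gamma>2 :: "'h \<Rightarrow> 'k2"
    and Q1 Q2 :: "complex \<Rightarrow> 'h \<Rightarrow> 'h" and z0 :: complex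
    and T1 :: "'k1 \<Rightarrow> 'k1" and T2 :: "'k2 \<Rightarrow> 'k2"
    and \<Gamma>01 :: "'h \<Rightarrow> 'k1" and \<Gamma>02 :: "'h \<Rightarrow> 'k2"
  assumes H: "chilbert smH ip"
    and K1: "pontryagin sm1 B1" and K2: "pontryagin sm2 B2"
  shows
   "((selfadj_rel sm1 B1 A1 \<and> selfadj_rel sm2 B2 A2
      \<and> z0 \<in> rset sm1 A1 \<and> z0 \<in> rset sm2 A2 \<and> Im z0 > 0
      \<and> cbounded smH sm1 \<Gamma>1 \<and> cbounded smH sm2 \<Gamma>2
      \<and> has_kadj ip B1 \<Gamma>1 \<and> has_kadj ip B2 \<Gamma>2
      \<and> has_kadj ip ip (Q1 z0) \<and> has_kadj ip ip (Q2 z0)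
      \<and> (\<forall>z \<in> rset sm1 A1. \<forall>h. Q1 z h = kadj ip ip (Q1 z0) h
            + smH (z - cnj z0) (kadj ip B1 \<Gamma>1 (\<Gamma>1 h + sm1 (z - z0) (resolv sm1 A1 z (\<Gamma>1 h)))))
      \<and> (\<forall>z \<in> rset sm2 A2. \<forall>h. Q2 z h = kadj ip ip (Q2 z0) h
            + smH (z - cnj z0) (kadj ip B2 \<Gamma>2 (\<Gamma>2 h + sm2 (z - z0) (resolv sm2 A2 z (\<Gamma>2 h))))))
     \<longrightarrow>
      (let A = dsum A1 A2; \<Gamma> = (\<lambda>h. (\<Gamma>1 h, \<Gamma>2 h)); sm = prod_sm sm1 sm2;
           \<Gamma>p = kadj ip (psum B1 B2) \<Gamma>
       in (\<forall>z \<in> rset sm1 A1 \<inter> rset sm2 A2. \<forall>h.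
             Q1 z h + Q2 z h = kadj ip ip (Q1 z0) h + kadj ip ip (Q2 z0) h
               + smH (z - cnj z0) (\<Gamma>p (\<Gamma> h + sm (z - z0) (resolv sm A z (\<Gamma> h)))))
        \<and> (inj \<Gamma>p \<longrightarrow>
             closure (module.span sm
               {\<Gamma> h + sm (z - z0) (resolv sm A z (\<Gamma> h)) | z h. z \<in> rset sm A}) = UNIV)))
    \<and>
    ((cbounded sm1 sm1 T1 \<and> selfadj_rel sm1 B1 (gr T1)
      \<and> cbounded sm2 sm2 T2 \<and> selfadj_rel sm2 B2 (gr T2)
      \<and> cbounded smH sm1 \<Gamma>01 \<and> cbounded smH sm2 \<Gamma>02
      \<and> has_kadj ip B1 \<Gamma>01 \<and> has_kadj ip B2 \<Gamma>02
      \<and> closure (module.span (prod_sm sm1 sm2)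
           {resolv (prod_sm sm1 sm2) (dsum (gr T1) (gr T2)) z (\<Gamma>01 h, \<Gamma>02 h) | z h.
              z \<in> rset (prod_sm sm1 sm2) (dsum (gr T1) (gr T2))}) = UNIV
      \<and> (inj \<Gamma>01 \<or> inj \<Gamma>02))
     \<longrightarrow>
      (\<forall>f. (\<forall>z \<in> rset (prod_sm sm1 sm2) (dsum (gr T1) (gr T2)). \<forall>h.
              ip f (kadj ip B1 \<Gamma>01 (resolv sm1 (gr T1) z (\<Gamma>01 h))
                    + kadj ip B2 \<Gamma>02 (resolv sm2 (gr T2) z (\<Gamma>02 h))) = 0)
           \<longrightarrow> f = 0))"
proof -
  obtain J1 J2 where J1: "fundamental_symmetry sm1 B1 J1" and J2: "fundamental_symmetry sm2 B2 J2"
    using pontryagin_fundamental_symmetry[OF K1] pontryagin_fundamental_symmetry[OF K2] by metis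
  have kernel_trivial: "f = 0"
    if "cbounded smH sm1 \<Gamma>01" "cbounded smH sm2 \<Gamma>02" "inj \<Gamma>01 \<or> inj \<Gamma>02"
      and "\<Gamma>01 f = 0" "\<Gamma>02 f = 0" for f
    using that cbounded_zero by (metis injD)
  show ?thesis
    unfolding Let_def
  proof ((intro conjI impI allI ballI; elim conjE), goal_cases)
    case (1 z h)
    then show ?case
      by (simp add: representation_dsum[OF H] algebra_simps)
  next
    case 2
    then show ?case
      by (intro representation_dsum_minimal[OF H J1 J2])
  next
    case (3 f)
    then show ?case
      using representation_dsum_orthogonal_imp_eq_0[OF H J1 J2] kernel_trivial by blast
  qed
qed

end
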